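(* Let $|q|<1$ and let $x,y$ be complex numbers. Then $$\sum_{k=0}^\infty\frac{(-1)^k y^k q^{\binom{k}{2}}}{(q;q)_k}\sum_{n=k}^\infty\sum_{m=k}^\infty h_{n+m-k}(x,y|q)\frac{t^n}{(q;q)_{n-k}}\frac{s^m}{(q;q)_{m-k}}=(xst;q)_\infty\sum_{n=0}^\infty\sum_{m=0}^\infty h_n(x,y|q)\,h_m(x,y|q)\frac{t^n}{(q;q)_n}\frac{s^m}{(q;q)_m}.$$
   Context: Throughout $|q|<1$. $(a;q)_n=\prod_{j=0}^{n-1}(1-aq^j)$, $(a;q)_\infty=\prod_{j\ge0}(1-aq^j)$, ${n\brack k}=\frac{(q;q)_n}{(q;q)_k(q;q)_{n-k}}$. $P_n(x,y)=(x-y)(x-qy)\cdots(x-q^{n-1}y)$ with $P_0=1$, and $h_n(x,y|q)=\sum_{k=0}^n{n\brack k}P_k(x,y)$. *)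

theory Defs
  imports "HOL-Analysis.Analysis"
begin

definition qpoch :: "complex \<Rightarrow> complex \<Rightarrow> nat \<Rightarrow> complex" where
  "qpoch a q n = (\<Prod>j<n. 1 - a * q ^ j)"

definition qpoch_inf :: "complex \<Rightarrow> complex \<Rightarrow> complex" where
  "qpoch_inf a q = (\<Prod>j. 1 - a * q ^ j)"

text \<open>Gaussian binomial coefficient [n k] (used for k \<le> n)\<close>
definition qbinom :: "complex \<Rightarrow> nat \<Rightarrow> nat \<Rightarrow> complex" where
  "qbinom q n k = qpoch q q n / (qpoch q q k * qpoch q q (n - k))"

definition Pq :: "complex \<Rightarrow> nat \<Rightarrow> complex \<Rightarrow> complex \<Rightarrow> complex" where
  "Pq q n x y = (\<Prod>j<n. x - q ^ j * y)"

definition hq :: "complex \<Rightarrow> nat \<Rightarrow> complex \<Rightarrow> complex \<Rightarrow> complex" where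
  "hq q n x y = (\<Sum>k\<le>n. qbinom q n k * Pq q k x y)"

end

theory Submission
  imports Defs "HOL-Computational_Algebra.Formal_Power_Series"
begin

(*
  Write e_k(z) = (-1)^k z^k q^(k choose 2) / (q;q)_k, so that sum_k e_k(z) = (z;q)_inf (Euler).
  Multiplying the right-hand side out with this expansion of (xst;q)_inf and regrouping both
  sides, which are absolutely convergent triple series, by the exponents of t and s, the theorem
  reduces to the finite identity, for all n and m,

    sum_k e_k(y) h_(n+m-k) / ((q;q)_(n-k) (q;q)_(m-k))
      = sum_k e_k(x) h_(n-k) h_(m-k) / ((q;q)_(n-k) (q;q)_(m-k)).

  Up to the factor (q;q)_m this is the coefficient of X^n in the formal power series identity
  (yX;q)_m A_m = A_0 W_m, where A_m = sum_n h_(n+m) X^n / (q;q)_n and W_m is the polynomial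
  sum_k [m k] (-x)^k q^(k choose 2) h_(m-k) X^k. That identity follows by induction on m from the
  q-difference equations X A_(m+1) = A_m - A_m(qX) and (1 - yX) A_0(qX) = (1 - X)(1 - xX) A_0;
  the latter holds because A_0 is the product of sum_n P_n X^n / (q;q)_n and sum_n X^n / (q;q)_n.
*)

unbundle no vec_syntax
notation fps_nth (infixl "$" 75)

section \<open>Rearranging absolutely convergent triple series\<close>

lemma suminf_if_le_shift:
  fixes f :: "nat \<Rightarrow> 'a::real_normed_vector"
  assumes "summable (\<lambda>b. f (b + k))"
  shows "(\<Sum>m. if k \<le> m then f m else 0) = (\<Sum>b. f (b + k))"
proof -
  have "(\<lambda>b. if k \<le> b + k then f (b + k) else 0) sums (\<Sum>b. f (b + k))"
    using summable_sums[OF assms] by simp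
  then have "(\<lambda>m. if k \<le> m then f m else 0) sums ((\<Sum>b. f (b + k)) + (\<Sum>i<k. if k \<le> i then f i else 0))"
    by (rule sums_iff_shift[THEN iffD1])
  then show ?thesis
    by (simp add: sums_iff)
qed

lemma geometric_bound_summable:
  fixes f :: "nat \<Rightarrow> 'a::banach"
  assumes bound: "\<And>n. norm (f n) \<le> K * g ^ n" and g: "0 \<le> g" "g < 1"
  shows "summable (\<lambda>n. norm (f n))" and "norm (suminf f) \<le> K / (1 - g)"
proof -
  have geometric: "summable (\<lambda>n. K * g ^ n)"
    using g by (intro summable_mult summable_geometric) auto
  show norm_summable: "summable (\<lambda>n. norm (f n))"
    by (rule summable_comparison_test'[OF geometric, of 0]) (use bound in auto)
  have "norm (suminf f) \<le> (\<Sum>n. norm (f n))"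
    by (rule summable_norm[OF norm_summable])
  also have "\<dots> \<le> (\<Sum>n. K * g ^ n)"
    by (rule suminf_le[OF bound norm_summable geometric])
  also have "\<dots> = K / (1 - g)"
    using g by (simp add: suminf_mult suminf_geometric summable_geometric)
  finally show "norm (suminf f) \<le> K / (1 - g)" .
qed

lemma double_suminf_if_le_shift:
  fixes F :: "nat \<Rightarrow> nat \<Rightarrow> 'a::banach"
  assumes bound: "\<And>a b. norm (F (a + k) (b + k)) \<le> K * \<beta> ^ a * \<gamma> ^ b"
    and \<beta>: "0 \<le> \<beta>" "\<beta> < 1" and \<gamma>: "0 \<le> \<gamma>" "\<gamma> < 1"
  shows "(\<Sum>n. if k \<le> n then (\<Sum>m. if k \<le> m then F n m else 0) else 0) = (\<Sum>a. \<Sum>b. F (a + k) (b + k))"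
    and "summable (\<lambda>a. \<Sum>b. F (a + k) (b + k))"
    and "summable (\<lambda>b. F (a + k) (b + k))"
proof -
  have inner: "summable (\<lambda>b. norm (F (a + k) (b + k)))"
    "norm (\<Sum>b. F (a + k) (b + k)) \<le> K / (1 - \<gamma>) * \<beta> ^ a" for a
    using geometric_bound_summable[of "\<lambda>b. F (a + k) (b + k)" "K * \<beta> ^ a" \<gamma>] bound \<gamma> by auto
  show inner_summable: "summable (\<lambda>b. F (a + k) (b + k))" for a
    by (rule summable_norm_cancel[OF inner(1)])
  show outer_summable: "summable (\<lambda>a. \<Sum>b. F (a + k) (b + k))"
    by (rule summable_norm_cancel[OF geometric_bound_summable(1)[OF inner(2) \<beta>]])
  have "(\<Sum>n. if k \<le> n then (\<Sum>m. if k \<le> m then F n m else 0) else 0)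
      = (\<Sum>a. \<Sum>m. if k \<le> m then F (a + k) m else 0)"
    by (rule suminf_if_le_shift) (simp add: suminf_if_le_shift[OF inner_summable] outer_summable)
  also have "\<dots> = (\<Sum>a. \<Sum>b. F (a + k) (b + k))"
    by (simp add: suminf_if_le_shift[OF inner_summable])
  finally show "(\<Sum>n. if k \<le> n then (\<Sum>m. if k \<le> m then F n m else 0) else 0)
      = (\<Sum>a. \<Sum>b. F (a + k) (b + k))" .
qed

lemma summable_on_times_nonneg:
  fixes f :: "'a \<Rightarrow> real" and g :: "'b \<Rightarrow> real"
  assumes "f summable_on A" "g summable_on B" "\<And>x. x \<in> A \<Longrightarrow> 0 \<le> f x" "\<And>y. y \<in> B \<Longrightarrow> 0 \<le> g y"
  shows "(\<lambda>(x, y). f x * g y) summable_on A \<times> B"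
proof -
  have "((\<lambda>y. f x * g y) has_sum f x * infsum g B) B" for x
    using assms(2) by (intro has_sum_cmult_right has_sum_infsum)
  then show ?thesis
    using assms by (intro summable_on_SigmaI[where g = "\<lambda>x. f x * infsum g B"] summable_on_cmult_left)
      auto
qed

lemma summable_on_geometric_triple:
  fixes u v w :: real
  assumes "0 \<le> u" "u < 1" "0 \<le> v" "v < 1" "0 \<le> w" "w < 1"
  shows "(\<lambda>(k, a, b). u ^ k * v ^ a * w ^ b) summable_on UNIV"
proof -
  have geometric: "(\<lambda>n. r ^ n) summable_on UNIV" if "0 \<le> r" "r < 1" for r :: real
    using that by (intro norm_summable_imp_summable_on) (simp add: summable_geometric)
  have "(\<lambda>(a, b). v ^ a * w ^ b) summable_on UNIV \<times> UNIV"
    using assms by (intro summable_on_times_nonneg geometric) simp_all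
  with assms have "(\<lambda>(k, ab). u ^ k * (\<lambda>(a, b). v ^ a * w ^ b) ab) summable_on UNIV \<times> (UNIV \<times> UNIV)"
    by (intro summable_on_times_nonneg geometric) (simp_all split: prod.split)
  then show ?thesis
    by (simp add: mult.assoc case_prod_unfold)
qed

lemma infsum_nat_eq_suminf:
  fixes f :: "nat \<Rightarrow> 'a::banach"
  assumes "f summable_on UNIV"
  shows "infsum f UNIV = suminf f"
  using has_sum_imp_sums[OF has_sum_infsum[OF assms]] by (simp add: sums_iff)

lemma triple_suminf_eq_infsum:
  fixes f :: "nat \<Rightarrow> nat \<Rightarrow> nat \<Rightarrow> complex"
  assumes summable: "(\<lambda>(k, a, b). f k a b) summable_on UNIV"
  shows "(\<Sum>k. \<Sum>a. \<Sum>b. f k a b) = infsum (\<lambda>(k, a, b). f k a b) UNIV"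
proof -
  have summable_k: "(\<lambda>(k, ab). case ab of (a, b) \<Rightarrow> f k a b) summable_on UNIV \<times> UNIV"
    using summable by (simp add: case_prod_unfold)
  have summable_ka: "(\<lambda>(a, b). f k a b) summable_on UNIV \<times> UNIV" for k
    using summable_on_SigmaD1[OF summable_k, of k] by simp
  have summable_kab: "(\<lambda>b. f k a b) summable_on UNIV" for k a
    using summable_on_SigmaD1[OF summable_ka, of a] by simp
  have "infsum (\<lambda>(k, a, b). f k a b) UNIV = infsum (\<lambda>k. infsum (\<lambda>(a, b). f k a b) UNIV) UNIV"
    using infsum_Sigma'_banach[OF summable_k] by simp
  also have "\<dots> = (\<Sum>k. infsum (\<lambda>(a, b). f k a b) UNIV)"
    using summable_on_Sigma_banach[OF summable_k] by (simp add: infsum_nat_eq_suminf)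
  also have "\<dots> = (\<Sum>k. \<Sum>a. \<Sum>b. f k a b)"
  proof -
    have "infsum (\<lambda>(a, b). f k a b) UNIV = (\<Sum>a. \<Sum>b. f k a b)" for k
      using infsum_Sigma'_banach[OF summable_ka] summable_on_Sigma_banach[OF summable_ka]
      by (simp add: infsum_nat_eq_suminf summable_kab)
    then show ?thesis
      by simp
  qed
  finally show ?thesis ..
qed

lemma infsum_shift_triple_eq_infsum_diagonal:
  fixes g :: "nat \<Rightarrow> nat \<Rightarrow> nat \<Rightarrow> 'a::banach"
  assumes summable: "(\<lambda>(k, a, b). g k (a + k) (b + k)) summable_on UNIV"
  shows "infsum (\<lambda>(k, a, b). g k (a + k) (b + k)) UNIV = infsum (\<lambda>(n, m). \<Sum>k\<le>min n m. g k n m) UNIV"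
proof -
  define T where "T = Sigma (UNIV :: (nat \<times> nat) set) (\<lambda>(n, m). {..min n m})"
  define h where "h = (\<lambda>((n, m), k). g k n m)"
  define i where "i = (\<lambda>((n::nat, m::nat), k::nat). (k, n - k, m - k))"
  define j where "j = (\<lambda>(k::nat, a::nat, b::nat). ((a + k, b + k), k))"
  have bij: "\<And>x. i (j x) = x" "\<And>x. j x \<in> T" "\<And>y. y \<in> T \<Longrightarrow> j (i y) = y"
    "\<And>y. i y \<in> UNIV" "\<And>x. h (j x) = (\<lambda>(k, a, b). g k (a + k) (b + k)) x"
    by (auto simp: i_def j_def T_def h_def)
  have "infsum (\<lambda>(k, a, b). g k (a + k) (b + k)) UNIV = infsum h T"
    by (rule infsum_reindex_bij_witness[of UNIV i j]) (use bij in auto)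
  moreover have "h summable_on T"
    using summable by (subst summable_on_reindex_bij_witness[of UNIV i j, symmetric]) (use bij in auto)
  then have "(\<lambda>(x, y). h (x, y)) summable_on Sigma UNIV (\<lambda>(n, m). {..min n m})"
    by (simp add: T_def)
  from infsum_Sigma'_banach[OF this]
  have "infsum h T = infsum (\<lambda>(n, m). \<Sum>k\<le>min n m. g k n m) UNIV"
    by (simp add: T_def h_def case_prod_unfold)
  ultimately show ?thesis
    by simp
qed

lemma summable_on_triple_geometric_bound:
  fixes W :: "nat \<times> nat \<times> nat \<Rightarrow> 'a::banach"
  assumes bound: "\<And>k a b. norm (W (k, a, b)) \<le> C * \<rho> ^ k * \<beta> ^ a * \<gamma> ^ b"
    and "0 \<le> \<rho>" "\<rho> < 1" "0 \<le> \<beta>" "\<beta> < 1" "0 \<le> \<gamma>" "\<gamma> < 1"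
  shows "W summable_on UNIV"
proof -
  have "(\<lambda>(k, a, b). C * (\<rho> ^ k * \<beta> ^ a * \<gamma> ^ b)) summable_on UNIV"
    using summable_on_geometric_triple[of \<rho> \<beta> \<gamma>] assms(2-)
    by (simp add: case_prod_unfold summable_on_cmult_right)
  moreover have "norm (W x) \<le> (\<lambda>(k, a, b). C * (\<rho> ^ k * \<beta> ^ a * \<gamma> ^ b)) x" if "x \<in> UNIV" for x
    using bound by (cases x) (simp add: mult.assoc)
  ultimately have "(\<lambda>x. norm (W x)) summable_on UNIV"
    by (rule Infinite_Sum.abs_summable_on_comparison_test')
  then show ?thesis
    by (rule abs_summable_summable)
qed

lemma suminf_triple_eq_infsum_diagonal:
  fixes F :: "nat \<Rightarrow> nat \<Rightarrow> nat \<Rightarrow> complex" and c :: "nat \<Rightarrow> complex"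
  assumes F_bound: "\<And>k a b. norm (F k (a + k) (b + k)) \<le> C * \<delta> ^ k * \<beta> ^ a * \<gamma> ^ b"
    and c_bound: "\<And>k. norm (c k) \<le> D * \<alpha> ^ k"
    and nonneg: "0 \<le> \<alpha>" "0 \<le> \<beta>" "0 \<le> \<gamma>" "0 \<le> \<delta>"
    and less_one: "\<alpha> * \<delta> < 1" "\<beta> < 1" "\<gamma> < 1"
  shows "(\<Sum>k. c k * (\<Sum>n. if k \<le> n then (\<Sum>m. if k \<le> m then F k n m else 0) else 0))
       = infsum (\<lambda>(n, m). \<Sum>k\<le>min n m. c k * F k n m) UNIV"
proof -
  have "0 \<le> D"
    using c_bound[of 0] by (auto intro: order_trans[OF norm_ge_zero])
  have "norm (c k * F k (a + k) (b + k)) \<le> (D * C) * (\<alpha> * \<delta>) ^ k * \<beta> ^ a * \<gamma> ^ b" for k a b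
  proof -
    have "norm (c k * F k (a + k) (b + k)) \<le> (D * \<alpha> ^ k) * (C * \<delta> ^ k * \<beta> ^ a * \<gamma> ^ b)"
      unfolding norm_mult by (rule mult_mono[OF c_bound F_bound]) (use \<open>0 \<le> D\<close> nonneg in auto)
    then show ?thesis
      by (simp add: power_mult_distrib mult_ac)
  qed
  then have summable: "(\<lambda>(k, a, b). c k * F k (a + k) (b + k)) summable_on UNIV"
    using nonneg less_one
    by (intro summable_on_triple_geometric_bound[where C = "D * C" and \<rho> = "\<alpha> * \<delta>"
          and \<beta> = \<beta> and \<gamma> = \<gamma>]) auto
  have "c k * (\<Sum>n. if k \<le> n then (\<Sum>m. if k \<le> m then F k n m else 0) else 0)
      = (\<Sum>a. \<Sum>b. c k * F k (a + k) (b + k))" for k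
  proof -
    note shift = double_suminf_if_le_shift[of "F k" k "C * \<delta> ^ k" \<beta> \<gamma>,
        OF F_bound nonneg(2) less_one(2) nonneg(3) less_one(3)]
    have "c k * (\<Sum>a. \<Sum>b. F k (a + k) (b + k)) = (\<Sum>a. c k * (\<Sum>b. F k (a + k) (b + k)))"
      by (rule suminf_mult[OF shift(2), symmetric])
    also have "\<dots> = (\<Sum>a. \<Sum>b. c k * F k (a + k) (b + k))"
      by (simp only: suminf_mult[OF shift(3)])
    finally show ?thesis
      by (simp only: shift(1))
  qed
  then have "(\<Sum>k. c k * (\<Sum>n. if k \<le> n then (\<Sum>m. if k \<le> m then F k n m else 0) else 0))
      = (\<Sum>k. \<Sum>a. \<Sum>b. c k * F k (a + k) (b + k))"
    by simp
  also have "\<dots> = infsum (\<lambda>(k, a, b). c k * F k (a + k) (b + k)) UNIV"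
    by (rule triple_suminf_eq_infsum) (use summable in simp)
  also have "\<dots> = infsum (\<lambda>(n, m). \<Sum>k\<le>min n m. c k * F k n m) UNIV"
    using infsum_shift_triple_eq_infsum_diagonal[of "\<lambda>k n m. c k * F k n m"] summable by simp
  finally show ?thesis .
qed

section \<open>q-Pochhammer symbols and Gaussian binomial coefficients\<close>

lemma qpoch_0 [simp]: "qpoch a q 0 = 1"
  by (simp add: qpoch_def)

lemma qpoch_Suc: "qpoch a q (Suc n) = qpoch a q n * (1 - a * q ^ n)"
  by (simp add: qpoch_def)

lemma Pq_0 [simp]: "Pq q 0 x y = 1"
  by (simp add: Pq_def)

lemma Pq_Suc: "Pq q (Suc k) x y = Pq q k x y * (x - q ^ k * y)"
  by (simp add: Pq_def)

lemma power_Suc_neq_one: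
  fixes q :: "'a::real_normed_div_algebra"
  assumes "norm q < 1"
  shows "q ^ Suc n \<noteq> 1"
proof
  assume "q ^ Suc n = 1"
  then have "norm q ^ Suc n = 1"
    by (metis norm_one norm_power)
  moreover have "norm q ^ Suc n \<le> norm q"
    using assms by (simp add: mult_left_le power_le_one)
  ultimately show False
    using assms by simp
qed

lemma sum_power_Suc_le:
  fixes r :: real
  assumes "0 \<le> r" "r < 1"
  shows "(\<Sum>j<n. r ^ Suc j) \<le> r / (1 - r)"
proof -
  have "(\<Sum>j<n. r ^ j) \<le> (\<Sum>j. r ^ j)"
    using assms by (intro sum_le_suminf summable_geometric) auto
  also have "\<dots> = 1 / (1 - r)"
    using assms by (simp add: suminf_geometric)
  finally have "r * (\<Sum>j<n. r ^ j) \<le> r * (1 / (1 - r))"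
    using assms by (intro mult_left_mono)
  then show ?thesis
    by (simp add: sum_distrib_left)
qed

lemma exp_neg_le_one_minus:
  fixes u r :: real
  assumes "0 \<le> u" "u \<le> r" "r < 1"
  shows "exp (- u / (1 - r)) \<le> 1 - u"
proof -
  have "1 / (1 - u) = 1 + u / (1 - u)"
    using assms by (simp add: field_simps)
  also have "\<dots> \<le> exp (u / (1 - u))"
    by (rule exp_ge_add_one_self)
  also have "\<dots> \<le> exp (u / (1 - r))"
    using assms by (simp add: frac_le)
  finally show ?thesis
    using assms by (simp add: exp_minus field_simps)
qed

context
  fixes q :: complex
  assumes q: "norm q < 1"
begin

lemma q_power_Suc_neq_one [simp]: "q ^ Suc n \<noteq> 1" "q * q ^ n \<noteq> 1"
  using power_Suc_neq_one[OF q, of n] by simp_all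

lemma qpoch_nonzero [simp]: "qpoch q q n \<noteq> 0"
  using power_Suc_neq_one[OF q] by (simp add: qpoch_def prod_zero_iff)

lemma qpoch_q_Suc: "qpoch q q (Suc n) = qpoch q q n * (1 - q ^ Suc n)"
  by (simp add: qpoch_Suc)

lemma qbinom_0_right [simp]: "qbinom q n 0 = 1"
  by (simp add: qbinom_def)

lemma qbinom_self [simp]: "qbinom q n n = 1"
  by (simp add: qbinom_def)

lemma qbinom_Suc:
  assumes "j \<le> Suc r"
  shows "qbinom q (Suc r) j = (if j \<le> r then qbinom q r j else 0)
    + (if j = 0 then 0 else q ^ (Suc r - j) * qbinom q r (j - 1))"
proof (cases "j = 0 \<or> j = Suc r")
  case False
  define i d where "i = j - 1" and "d = r - j"
  then have ij: "j = Suc i" "r = i + Suc d"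
    using False assms by auto
  have add_fracs: "A / (B * a * C) + Q * (A / (B * (C * c))) = A * (c + Q * a) / (B * a * (C * c))"
    if "B \<noteq> 0" "a \<noteq> 0" "C \<noteq> 0" "c \<noteq> 0" for A B C Q a c :: complex
    using that by (simp add: field_simps)
  have diff: "Suc r - j = Suc d" "r - j = d" "j - 1 = i" "r - i = Suc d"
    using ij by auto
  have "qbinom q r j + q ^ (Suc r - j) * qbinom q r (j - 1)
      = qpoch q q r / (qpoch q q i * (1 - q ^ Suc i) * qpoch q q d)
        + q ^ Suc d * (qpoch q q r / (qpoch q q i * (qpoch q q d * (1 - q ^ Suc d))))"
    unfolding qbinom_def diff unfolding ij(1) qpoch_q_Suc by simp
  also have "\<dots> = qpoch q q r * ((1 - q ^ Suc d) + q ^ Suc d * (1 - q ^ Suc i))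
      / (qpoch q q i * (1 - q ^ Suc i) * (qpoch q q d * (1 - q ^ Suc d)))"
    by (rule add_fracs) (simp_all del: power_Suc)
  also have "(1 - q ^ Suc d) + q ^ Suc d * (1 - q ^ Suc i) = 1 - q ^ Suc r"
    by (simp add: ij(2) algebra_simps flip: power_add)
  finally show ?thesis
    unfolding qbinom_def diff unfolding ij(1) qpoch_q_Suc using ij by (simp add: mult_ac)
qed auto

lemma qbinom_mult_qbinom:
  assumes "i + j \<le> m"
  shows "qbinom q m i * qbinom q (m - i) j = qbinom q m j * qbinom q (m - j) i"
  using assms by (simp add: qbinom_def field_simps diff_commute[of m i j])

lemma norm_qpoch_ge: "exp (- norm q / (1 - norm q) ^ 2) \<le> norm (qpoch q q n)"
proof -
  let ?r = "norm q"
  have "(\<Sum>j<n. ?r ^ Suc j) / (1 - ?r) \<le> ?r / (1 - ?r) / (1 - ?r)"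
    using sum_power_Suc_le[of ?r n] q by (intro divide_right_mono) auto
  then have "exp (- ?r / (1 - ?r) ^ 2) \<le> exp (- (\<Sum>j<n. ?r ^ Suc j) / (1 - ?r))"
    by (simp add: power2_eq_square)
  also have "\<dots> = (\<Prod>j<n. exp (- (?r ^ Suc j) / (1 - ?r)))"
    by (simp add: exp_sum[symmetric] sum_negf sum_divide_distrib)
  also have "\<dots> \<le> (\<Prod>j<n. norm (1 - q * q ^ j))"
  proof (rule prod_mono)
    fix j
    have "exp (- (?r ^ Suc j) / (1 - ?r)) \<le> 1 - ?r ^ Suc j"
      using q by (intro exp_neg_le_one_minus) (auto simp: mult_left_le power_le_one)
    also have "\<dots> \<le> norm (1 - q * q ^ j)"
      using norm_triangle_ineq2[of 1 "q * q ^ j"] by (simp add: norm_mult norm_power)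
    finally show "0 \<le> exp (- (?r ^ Suc j) / (1 - ?r)) \<and> exp (- (?r ^ Suc j) / (1 - ?r)) \<le> norm (1 - q * q ^ j)"
      by simp
  qed
  finally show ?thesis
    by (simp add: qpoch_def prod_norm)
qed

lemma norm_qpoch_le: "norm (qpoch q q n) \<le> exp (norm q / (1 - norm q))"
proof -
  let ?r = "norm q"
  have "norm (qpoch q q n) = (\<Prod>j<n. norm (1 - q * q ^ j))"
    by (simp add: qpoch_def prod_norm)
  also have "\<dots> \<le> (\<Prod>j<n. exp (?r ^ Suc j))"
  proof (rule prod_mono)
    fix j
    have "norm (1 - q * q ^ j) \<le> 1 + ?r ^ Suc j"
      using norm_triangle_ineq4[of 1 "q * q ^ j"] by (simp add: norm_mult norm_power)
    also have "\<dots> \<le> exp (?r ^ Suc j)"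
      by (rule exp_ge_add_one_self)
    finally show "0 \<le> norm (1 - q * q ^ j) \<and> norm (1 - q * q ^ j) \<le> exp (?r ^ Suc j)"
      by simp
  qed
  also have "\<dots> = exp (\<Sum>j<n. ?r ^ Suc j)"
    by (simp add: exp_sum)
  also have "\<dots> \<le> exp (?r / (1 - ?r))"
    using sum_power_Suc_le[of ?r n] q by simp
  finally show ?thesis .
qed

lemma qpoch_inverse_bounded: "\<exists>K. \<forall>n. norm (1 / qpoch q q n) \<le> K"
proof (intro exI allI)
  fix n
  have "1 / norm (qpoch q q n) \<le> 1 / exp (- norm q / (1 - norm q) ^ 2)"
    using norm_qpoch_ge[of n] by (intro divide_left_mono) (simp_all add: zero_less_mult_iff)
  then show "norm (1 / qpoch q q n) \<le> exp (norm q / (1 - norm q) ^ 2)"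
    by (simp add: norm_divide exp_minus divide_inverse norm_inverse)
qed

lemma qbinom_bounded: "\<exists>B. \<forall>n k. norm (qbinom q n k) \<le> B"
proof -
  obtain K where K: "\<And>n. norm (1 / qpoch q q n) \<le> K"
    using qpoch_inverse_bounded by blast
  then have "0 \<le> K"
    using norm_ge_zero order_trans by blast
  have "norm (qbinom q n k) \<le> exp (norm q / (1 - norm q)) * K * K" for n k
  proof -
    have "norm (qbinom q n k) = norm (qpoch q q n) * norm (1 / qpoch q q k) * norm (1 / qpoch q q (n - k))"
      by (simp add: qbinom_def norm_mult norm_divide)
    also have "\<dots> \<le> exp (norm q / (1 - norm q)) * K * K"
      by (intro mult_mono norm_qpoch_le K) (simp_all add: \<open>0 \<le> K\<close>)
    finally show ?thesis .
  qed
  then show ?thesis by blast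
qed

lemma norm_Pq_le: "norm (Pq q k x y) \<le> (norm x + norm y) ^ k"
proof -
  have "norm (Pq q k x y) = (\<Prod>j<k. norm (x - q ^ j * y))"
    by (simp add: Pq_def prod_norm)
  also have "\<dots> \<le> (\<Prod>j<k. norm x + norm y)"
  proof (rule prod_mono)
    fix j
    have "norm (q ^ j * y) \<le> norm y"
      using q by (simp add: norm_mult norm_power power_le_one mult_left_le_one_le)
    then show "0 \<le> norm (x - q ^ j * y) \<and> norm (x - q ^ j * y) \<le> norm x + norm y"
      using norm_triangle_ineq4[of x "q ^ j * y"] by simp
  qed
  finally show ?thesis
    by simp
qed

lemma hq_bounded: "\<exists>B. \<forall>N. norm (hq q N x y) \<le> B * (1 + norm x + norm y) ^ N"
proof -
  obtain B where B: "\<And>n k. norm (qbinom q n k) \<le> B"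
    using qbinom_bounded by blast
  let ?a = "norm x + norm y"
  have "norm (hq q N x y) \<le> B * (1 + norm x + norm y) ^ N" for N
  proof -
    have "norm (hq q N x y) \<le> (\<Sum>k\<le>N. norm (qbinom q N k) * norm (Pq q k x y))"
      unfolding hq_def norm_mult[symmetric] by (rule norm_sum)
    also have "\<dots> \<le> (\<Sum>k\<le>N. B * (real (N choose k) * ?a ^ k))"
    proof (rule sum_mono)
      fix k assume "k \<in> {..N}"
      then have "1 \<le> real (N choose k)"
        by (simp add: Suc_le_eq zero_less_binomial)
      then have "?a ^ k \<le> real (N choose k) * ?a ^ k"
        using mult_right_mono[of 1 "real (N choose k)" "?a ^ k"] by simp
      then show "norm (qbinom q N k) * norm (Pq q k x y) \<le> B * (real (N choose k) * ?a ^ k)"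
        using norm_Pq_le[of k x y] by (intro mult_mono B) (auto intro: order_trans[OF norm_ge_zero B])
    qed
    also have "\<dots> = B * (?a + 1) ^ N"
      by (simp add: binomial_ring[of ?a 1] sum_distrib_left)
    finally show ?thesis
      by (simp add: ac_simps)
  qed
  then show ?thesis by blast
qed

end

section \<open>Euler's identity\<close>

lemma choose_two_Suc: "Suc i choose 2 = (i choose 2) + i"
  by (simp add: numeral_2_eq_2)

definition euler_term :: "complex \<Rightarrow> complex \<Rightarrow> nat \<Rightarrow> complex" where
  "euler_term q z k = (-1) ^ k * z ^ k * q ^ (k choose 2) / qpoch q q k"

lemma euler_term_0 [simp]: "euler_term q z 0 = 1"
  by (simp add: euler_term_def binomial_eq_0)

lemma euler_term_eq_powser: "euler_term q z = (\<lambda>k. euler_term q 1 k * z ^ k)"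
  by (simp add: euler_term_def fun_eq_iff)

lemma qpoch_tendsto_qpoch_inf:
  fixes q z :: complex
  assumes "norm q < 1"
  shows "(\<lambda>n. qpoch z q n) \<longlonglongrightarrow> qpoch_inf z q"
proof -
  have "summable (\<lambda>j. norm ((1 - z * q ^ j) - 1))"
    using assms by (simp add: norm_mult norm_power summable_geometric)
  then have "convergent_prod (\<lambda>j. 1 - z * q ^ j)"
    by (intro abs_convergent_prod_imp_convergent_prod summable_imp_abs_convergent_prod)
  then have "(\<lambda>n. \<Prod>j\<le>n. 1 - z * q ^ j) \<longlonglongrightarrow> qpoch_inf z q"
    unfolding qpoch_inf_def by (rule convergent_prod_LIMSEQ)
  then show ?thesis
    by (simp add: qpoch_def LIMSEQ_lessThan_iff_atMost)
qed

context
  fixes q :: complex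
  assumes q: "norm q < 1"
begin

lemma euler_term_bounded: "\<exists>K. \<forall>z k. norm (euler_term q z k) \<le> K * norm z ^ k"
proof -
  obtain K where K: "\<And>n. norm (1 / qpoch q q n) \<le> K"
    using qpoch_inverse_bounded[OF q] by blast
  have "norm (euler_term q z k) \<le> K * norm z ^ k" for z k
  proof -
    have "norm (euler_term q z k) = norm z ^ k * norm q ^ (k choose 2) * norm (1 / qpoch q q k)"
      by (simp add: euler_term_def norm_mult norm_divide norm_power)
    also have "\<dots> \<le> norm z ^ k * 1 * K"
      using q by (intro mult_mono K power_le_one) auto
    finally show ?thesis
      by (simp add: mult.commute)
  qed
  then show ?thesis by blast
qed

lemma summable_norm_euler_term:
  assumes "norm z < 1"
  shows "summable (\<lambda>k. norm (euler_term q z k))"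
proof -
  obtain K where "\<And>k. norm (euler_term q z k) \<le> K * norm z ^ k"
    using euler_term_bounded by blast
  then show ?thesis
    by (rule geometric_bound_summable(1)) (use assms in simp_all)
qed

lemma summable_euler_term: "norm z < 1 \<Longrightarrow> summable (euler_term q z)"
  using summable_norm_euler_term summable_norm_cancel by blast

lemma euler_term_Suc:
  "euler_term q z (Suc j) = euler_term q (q * z) (Suc j) - z * euler_term q (q * z) j"
proof -
  have add_fracs: "- w / (A * (1 - a)) = - w * a / (A * (1 - a)) - w / A"
    if "A \<noteq> 0" "1 - a \<noteq> 0" for A a w :: complex
    using that by (simp add: field_simps)
  define c where "c = (-1) ^ j * z ^ j * q ^ (j choose 2) * q ^ j"
  have "euler_term q z (Suc j) = - (z * c) / (qpoch q q j * (1 - q ^ Suc j))"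
    unfolding euler_term_def c_def qpoch_q_Suc[OF q] choose_two_Suc
    by (simp add: power_add algebra_simps)
  moreover have "euler_term q (q * z) (Suc j) = - (z * c) * q ^ Suc j / (qpoch q q j * (1 - q ^ Suc j))"
    unfolding euler_term_def c_def qpoch_q_Suc[OF q] choose_two_Suc
    by (simp add: power_add power_mult_distrib algebra_simps)
  moreover have "z * euler_term q (q * z) j = (z * c) / qpoch q q j"
    unfolding euler_term_def c_def by (simp add: power_mult_distrib algebra_simps)
  ultimately show ?thesis
    using q by (simp only:) (rule add_fracs; simp del: power_Suc)
qed

lemma norm_q_mult_less_one: "norm z < 1 \<Longrightarrow> norm (q * z) < 1"
  using q mult_left_le_one_le[of "norm z" "norm q"] by (simp add: norm_mult)

lemma suminf_euler_term_functional_eq: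
  assumes z: "norm z < 1"
  shows "suminf (euler_term q z) = (1 - z) * suminf (euler_term q (q * z))"
proof -
  have sums: "euler_term q (q * z) sums suminf (euler_term q (q * z))"
    by (intro summable_sums summable_euler_term norm_q_mult_less_one z)
  define g where "g j = (if j = 0 then 0 else z * euler_term q (q * z) (j - 1))" for j
  have "(\<lambda>j. g (Suc j)) sums (z * suminf (euler_term q (q * z)))"
    using sums_mult[OF sums, of z] by (simp add: g_def)
  then have "g sums (z * suminf (euler_term q (q * z)) + g 0)"
    by (simp only: sums_Suc_iff)
  then have "g sums (z * suminf (euler_term q (q * z)))"
    by (simp add: g_def)
  from sums_diff[OF sums this]
  have "(\<lambda>j. euler_term q (q * z) j - g j) sums ((1 - z) * suminf (euler_term q (q * z)))"
    by (simp add: algebra_simps)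
  moreover have "(\<lambda>j. euler_term q (q * z) j - g j) = euler_term q z"
  proof
    fix j
    show "euler_term q (q * z) j - g j = euler_term q z j"
      by (cases j) (simp_all add: g_def euler_term_Suc[of z])
  qed
  ultimately show ?thesis
    by (simp add: sums_iff)
qed

lemma suminf_euler_term_iterate:
  "norm z < 1 \<Longrightarrow> suminf (euler_term q z) = qpoch z q N * suminf (euler_term q (q ^ N * z))"
proof (induction N arbitrary: z)
  case 0
  then show ?case by simp
next
  case (Suc N)
  have "suminf (euler_term q z) = (1 - z) * suminf (euler_term q (q * z))"
    by (rule suminf_euler_term_functional_eq[OF Suc.prems])
  also have "\<dots> = ((1 - z) * qpoch (q * z) q N) * suminf (euler_term q (q ^ N * (q * z)))"
    by (simp only: Suc.IH[OF norm_q_mult_less_one[OF Suc.prems]] mult.assoc)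
  also have "(1 - z) * qpoch (q * z) q N = qpoch z q (Suc N)"
    unfolding qpoch_def by (subst prod.lessThan_Suc_shift) (simp add: algebra_simps)
  also have "q ^ N * (q * z) = q ^ Suc N * z"
    by (simp add: mult_ac)
  finally show ?case .
qed

lemma suminf_euler_term_tendsto_1:
  "(\<lambda>N. suminf (euler_term q (q ^ N * z))) \<longlonglongrightarrow> 1"
proof -
  define f where "f w = (\<Sum>n. euler_term q 1 n * w ^ n)" for w
  have "summable (\<lambda>n. euler_term q 1 n * (1 / 2) ^ n)"
    using summable_euler_term[of "1 / 2"] by (simp add: euler_term_eq_powser[of q "1 / 2"])
  then have "isCont f 0"
    unfolding f_def by (rule isCont_powser) simp
  moreover have "(\<lambda>N. q ^ N * z) \<longlonglongrightarrow> 0"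
    using q by (intro tendsto_mult_left_zero LIMSEQ_power_zero) 
  ultimately have "(\<lambda>N. f (q ^ N * z)) \<longlonglongrightarrow> f 0"
    by (rule isCont_tendsto_compose)
  moreover have "f 0 = 1"
    unfolding f_def using powser_zero[of "euler_term q 1"] by simp
  ultimately show ?thesis
    by (simp add: f_def euler_term_eq_powser[of q "q ^ _ * z"])
qed

theorem euler_term_sums_qpoch_inf:
  assumes "norm z < 1"
  shows "euler_term q z sums qpoch_inf z q"
proof -
  have "(\<lambda>N. qpoch z q N * suminf (euler_term q (q ^ N * z))) \<longlonglongrightarrow> qpoch_inf z q * 1"
    by (intro tendsto_mult qpoch_tendsto_qpoch_inf[OF q] suminf_euler_term_tendsto_1)
  then have "suminf (euler_term q z) = qpoch_inf z q"
    using suminf_euler_term_iterate[OF assms] by (simp add: LIMSEQ_const_iff)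
  then show ?thesis
    using summable_sums[OF summable_euler_term[OF assms]] by simp
qed

lemma qpoch_inf_mult_eq_suminf:
  assumes "norm (z * w) < 1"
  shows "qpoch_inf (z * w) q * S = (\<Sum>k. euler_term q z k * (w ^ k * S))"
proof -
  have "euler_term q (z * w) = (\<lambda>k. euler_term q z k * w ^ k)"
    by (rule ext) (simp add: euler_term_def power_mult_distrib field_simps)
  then have "(\<lambda>k. euler_term q z k * w ^ k) sums qpoch_inf (z * w) q"
    using euler_term_sums_qpoch_inf[OF assms] by simp
  then show ?thesis
    by (metis (no_types, lifting) sums_summable sums_unique suminf_cong suminf_mult2 mult.assoc)
qed

end

section \<open>Generating functions of the polynomials h_n\<close>

definition lin_factor :: "complex \<Rightarrow> complex fps" where
  "lin_factor c = 1 - fps_const c * fps_X"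

abbreviation fps_dilate :: "complex \<Rightarrow> complex fps \<Rightarrow> complex fps" where
  "fps_dilate c F \<equiv> F oo (fps_const c * fps_X)"

definition fps_qpoch :: "complex \<Rightarrow> complex \<Rightarrow> nat \<Rightarrow> complex fps" where
  "fps_qpoch z q r = (\<Prod>j<r. lin_factor (z * q ^ j))"

lemma lin_factor_nth_0 [simp]: "lin_factor c $ 0 = 1"
  by (simp add: lin_factor_def)

lemma lin_factor_mult_nth:
  "(lin_factor c * F) $ n = F $ n - (if n = 0 then 0 else c * F $ (n - 1))"
proof -
  have "lin_factor c * F = F - fps_const c * (fps_X * F)"
    by (simp add: lin_factor_def algebra_simps)
  then show ?thesis
    by (simp add: fps_X_mult_nth)
qed

lemma fps_dilate_mult: "fps_dilate c (F * G) = fps_dilate c F * fps_dilate c G"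
  by (simp add: fps_compose_mult_distrib)

lemma fps_dilate_lin_factor: "fps_dilate q (lin_factor c) = lin_factor (c * q)"
  by (simp add: lin_factor_def fps_compose_sub_distrib fps_compose_mult_distrib mult.assoc)

lemma fps_qpoch_Suc: "fps_qpoch z q (Suc r) = fps_qpoch z q r * lin_factor (z * q ^ r)"
  by (simp add: fps_qpoch_def)

lemma fps_dilate_fps_qpoch: "fps_dilate q (fps_qpoch z q r) = fps_qpoch (q * z) q r"
proof -
  have "fps_dilate q (fps_qpoch z q r) = (\<Prod>j<r. lin_factor (z * q ^ j * q))"
    unfolding fps_qpoch_def by (simp add: fps_compose_prod_distrib fps_dilate_lin_factor)
  then show ?thesis
    unfolding fps_qpoch_def by (simp add: mult_ac)
qed

lemma fps_qpoch_Suc_dilate: "fps_qpoch z q (Suc r) = lin_factor z * fps_dilate q (fps_qpoch z q r)"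
  unfolding fps_dilate_fps_qpoch unfolding fps_qpoch_def prod.lessThan_Suc_shift
  by (simp add: mult_ac)

definition hq_gf :: "complex \<Rightarrow> complex \<Rightarrow> complex \<Rightarrow> nat \<Rightarrow> complex fps" where
  "hq_gf q x y m = Abs_fps (\<lambda>n. hq q (n + m) x y / qpoch q q n)"

context
  fixes q :: complex
  assumes q: "norm q < 1"
begin

lemma fps_qpoch_nth:
  "fps_qpoch z q r $ j = (if j \<le> r then qbinom q r j * (-z) ^ j * q ^ (j choose 2) else 0)"
proof (induction r arbitrary: j)
  case 0
  then show ?case
    by (simp add: fps_qpoch_def binomial_eq_0 q)
next
  case (Suc r)
  have rec: "fps_qpoch z q (Suc r) $ j
      = fps_qpoch z q r $ j - (if j = 0 then 0 else z * q ^ r * fps_qpoch z q r $ (j - 1))"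
    by (simp add: fps_qpoch_Suc mult.commute[of "fps_qpoch z q r"] lin_factor_mult_nth)
  show ?case
  proof (cases j)
    case (Suc i)
    show ?thesis
    proof (cases "i \<le> r")
      case True
      have "fps_qpoch z q (Suc r) $ Suc i = fps_qpoch z q r $ Suc i - z * q ^ r * fps_qpoch z q r $ i"
        using rec Suc by simp
      also have "\<dots> = ((if Suc i \<le> r then qbinom q r (Suc i) else 0) + q ^ (r - i) * qbinom q r i)
          * (-z) ^ Suc i * q ^ (Suc i choose 2)"
      proof -
        have "q ^ r = q ^ (r - i) * q ^ i"
          using True by (simp flip: power_add)
        then show ?thesis
          using True by (simp add: Suc.IH choose_two_Suc power_add algebra_simps)
      qed
      also have "\<dots> = qbinom q (Suc r) (Suc i) * (-z) ^ Suc i * q ^ (Suc i choose 2)"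
        using qbinom_Suc[OF q, of "Suc i" r] True by (simp add: algebra_simps)
      finally show ?thesis
        using Suc True by simp
    qed (use rec Suc.IH Suc in simp)
  qed (use rec Suc.IH in \<open>simp add: q binomial_eq_0\<close>)
qed

lemma hq_gf_0_eq:
  "hq_gf q x y 0 = Abs_fps (\<lambda>n. Pq q n x y / qpoch q q n) * Abs_fps (\<lambda>n. 1 / qpoch q q n)"
proof (rule fps_ext)
  fix n
  have "(\<Sum>i\<le>n. Pq q i x y / qpoch q q i * (1 / qpoch q q (n - i)))
      = (\<Sum>i\<le>n. qbinom q n i * Pq q i x y) / qpoch q q n"
    unfolding sum_divide_distrib by (rule sum.cong) (auto simp: qbinom_def q)
  then show "hq_gf q x y 0 $ n = (Abs_fps (\<lambda>n. Pq q n x y / qpoch q q n) * Abs_fps (\<lambda>n. 1 / qpoch q q n)) $ n"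
    by (simp add: hq_gf_def hq_def fps_mult_nth atLeast0AtMost)
qed

lemma qexp_fps_dilate:
  "fps_dilate q (Abs_fps (\<lambda>n. 1 / qpoch q q n)) = lin_factor 1 * Abs_fps (\<lambda>n. 1 / qpoch q q n)"
proof (rule fps_ext)
  fix n
  show "fps_dilate q (Abs_fps (\<lambda>n. 1 / qpoch q q n)) $ n = (lin_factor 1 * Abs_fps (\<lambda>n. 1 / qpoch q q n)) $ n"
  proof (cases n)
    case (Suc k)
    have "q ^ Suc k / (qpoch q q k * (1 - q ^ Suc k)) = 1 / (qpoch q q k * (1 - q ^ Suc k)) - 1 / qpoch q q k"
      using q by (simp add: field_simps del: power_Suc)
    then show ?thesis
      using Suc by (simp add: lin_factor_mult_nth qpoch_q_Suc[OF q] del: power_Suc)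
  qed (simp add: lin_factor_mult_nth)
qed

lemma Pq_fps_dilate:
  "lin_factor y * fps_dilate q (Abs_fps (\<lambda>n. Pq q n x y / qpoch q q n))
    = lin_factor x * Abs_fps (\<lambda>n. Pq q n x y / qpoch q q n)"
proof (rule fps_ext)
  fix n
  show "(lin_factor y * fps_dilate q (Abs_fps (\<lambda>n. Pq q n x y / qpoch q q n))) $ n
      = (lin_factor x * Abs_fps (\<lambda>n. Pq q n x y / qpoch q q n)) $ n"
  proof (cases n)
    case (Suc k)
    have "q ^ Suc k * (Pq q k x y * (x - q ^ k * y) / (qpoch q q k * (1 - q ^ Suc k)))
          - y * (q ^ k * (Pq q k x y / qpoch q q k))
        = Pq q k x y * (x - q ^ k * y) / (qpoch q q k * (1 - q ^ Suc k)) - x * (Pq q k x y / qpoch q q k)"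
      using q by (simp add: field_simps del: power_Suc)
    then show ?thesis
      using Suc by (simp add: lin_factor_mult_nth qpoch_q_Suc[OF q] Pq_Suc del: power_Suc)
  qed (simp add: lin_factor_mult_nth)
qed

lemma hq_gf_0_dilate:
  "lin_factor y * fps_dilate q (hq_gf q x y 0) = lin_factor 1 * lin_factor x * hq_gf q x y 0"
proof -
  have "lin_factor y * fps_dilate q (hq_gf q x y 0)
      = (lin_factor y * fps_dilate q (Abs_fps (\<lambda>n. Pq q n x y / qpoch q q n)))
        * fps_dilate q (Abs_fps (\<lambda>n. 1 / qpoch q q n))"
    by (simp only: hq_gf_0_eq fps_dilate_mult mult.assoc)
  also have "\<dots> = (lin_factor x * Abs_fps (\<lambda>n. Pq q n x y / qpoch q q n)) * (lin_factor 1 * Abs_fps (\<lambda>n. 1 / qpoch q q n))"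
    by (simp only: Pq_fps_dilate qexp_fps_dilate)
  finally show ?thesis
    by (simp add: hq_gf_0_eq mult_ac)
qed

lemma hq_gf_Suc: "fps_X * hq_gf q x y (Suc m) = hq_gf q x y m - fps_dilate q (hq_gf q x y m)"
proof (rule fps_ext)
  fix n
  show "(fps_X * hq_gf q x y (Suc m)) $ n = (hq_gf q x y m - fps_dilate q (hq_gf q x y m)) $ n"
  proof (cases n)
    case (Suc k)
    have cancel: "h / (A * (1 - a)) - a * (h / (A * (1 - a))) = h / A"
      if "A \<noteq> 0" "1 - a \<noteq> 0" for A a h :: complex
    proof -
      have "h / (A * (1 - a)) - a * (h / (A * (1 - a))) = (1 - a) * (h / (A * (1 - a)))"
        by (simp only: left_diff_distrib mult_1)
      then show ?thesis
        using that by simp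
    qed
    have "h / qpoch q q (Suc k) - q ^ Suc k * (h / qpoch q q (Suc k)) = h / qpoch q q k" for h
      unfolding qpoch_q_Suc[OF q] by (rule cancel) (simp_all add: q del: power_Suc)
    then show ?thesis
      using Suc by (simp add: fps_X_mult_nth hq_gf_def del: power_Suc)
  qed (simp add: fps_X_mult_nth hq_gf_def)
qed

end

definition hq_multiplier :: "complex \<Rightarrow> complex \<Rightarrow> complex \<Rightarrow> nat \<Rightarrow> complex fps" where
  "hq_multiplier q x y m = (\<Sum>i\<le>m. fps_const (qbinom q m i * Pq q i x y) * fps_qpoch x q (m - i))"

lemma sum_if_le_eq_sum_atMost_min:
  fixes n m :: nat
  shows "(\<Sum>k=0..n. if k \<le> m then f k else 0) = (\<Sum>k\<le>min n m. f k)"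
proof -
  have "(\<Sum>k=0..n. if k \<le> m then f k else 0) = sum f {k\<in>{0..n}. k \<le> m}"
    by (rule sum.inter_filter[symmetric]) simp
  also have "{k\<in>{0..n}. k \<le> m} = {..min n m}"
    by auto
  finally show ?thesis .
qed

lemma lin_factor_difference:
  "lin_factor a * R - lin_factor 1 * (R * lin_factor b) = fps_X * (R * lin_factor b + fps_const (b - a) * R)"
  by (simp add: lin_factor_def algebra_simps flip: fps_const_sub)

context
  fixes q x y :: complex
  assumes q: "norm q < 1"
begin

lemma hq_multiplier_Suc:
  "hq_multiplier q x y (Suc m) = (\<Sum>i\<le>m. fps_const (qbinom q m i * Pq q i x y)
     * (fps_qpoch x q (Suc (m - i)) + fps_const (q ^ (m - i) * (x - q ^ i * y)) * fps_qpoch x q (m - i)))"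
proof -
  have "hq_multiplier q x y (Suc m)
      = (\<Sum>i\<le>Suc m. if i \<le> m then fps_const (qbinom q m i * Pq q i x y) * fps_qpoch x q (Suc m - i) else 0)
      + (\<Sum>i\<le>Suc m. if i = 0 then 0
          else fps_const (q ^ (Suc m - i) * qbinom q m (i - 1) * Pq q i x y) * fps_qpoch x q (Suc m - i))"
    unfolding hq_multiplier_def sum.distrib[symmetric]
    by (rule sum.cong) (simp_all add: qbinom_Suc[OF q] algebra_simps flip: fps_const_add fps_const_mult)
  also have "(\<Sum>i\<le>Suc m. if i \<le> m then fps_const (qbinom q m i * Pq q i x y) * fps_qpoch x q (Suc m - i) else 0)
      = (\<Sum>i\<le>m. fps_const (qbinom q m i * Pq q i x y) * fps_qpoch x q (Suc (m - i)))"
    by (simp add: Suc_diff_le)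
  also have "(\<Sum>i\<le>Suc m. if i = 0 then 0
          else fps_const (q ^ (Suc m - i) * qbinom q m (i - 1) * Pq q i x y) * fps_qpoch x q (Suc m - i))
      = (\<Sum>i\<le>m. fps_const (qbinom q m i * Pq q i x y) * (fps_const (q ^ (m - i) * (x - q ^ i * y)) * fps_qpoch x q (m - i)))"
    unfolding sum.atMost_Suc_shift by (simp add: Pq_Suc mult_ac flip: fps_const_mult)
  finally show ?thesis
    by (simp add: sum.distrib distrib_left)
qed

lemma hq_multiplier_difference:
  "lin_factor (y * q ^ m) * hq_multiplier q x y m - lin_factor 1 * (lin_factor x * fps_dilate q (hq_multiplier q x y m))
    = fps_X * (\<Sum>i\<le>m. fps_const (qbinom q m i * Pq q i x y)
       * (fps_qpoch x q (Suc (m - i)) + fps_const (q ^ (m - i) * (x - q ^ i * y)) * fps_qpoch x q (m - i)))"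
proof -
  have summand: "lin_factor (y * q ^ m) * fps_qpoch x q (m - i) - lin_factor 1 * fps_qpoch x q (Suc (m - i))
      = fps_X * (fps_qpoch x q (Suc (m - i)) + fps_const (q ^ (m - i) * (x - q ^ i * y)) * fps_qpoch x q (m - i))"
    if "i \<le> m" for i
  proof -
    have "q ^ (m - i) * (x - q ^ i * y) = x * q ^ (m - i) - y * q ^ m"
      using that by (simp add: algebra_simps flip: power_add)
    then show ?thesis
      using lin_factor_difference[of "y * q ^ m" "fps_qpoch x q (m - i)" "x * q ^ (m - i)"]
      by (simp add: fps_qpoch_Suc)
  qed
  have "lin_factor x * fps_dilate q (fps_const c * fps_qpoch x q r) = fps_const c * fps_qpoch x q (Suc r)"
    for c r
    by (simp only: fps_dilate_mult fps_const_compose fps_qpoch_Suc_dilate mult.left_commute)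
  then have dilate: "lin_factor x * fps_dilate q (hq_multiplier q x y m)
      = (\<Sum>i\<le>m. fps_const (qbinom q m i * Pq q i x y) * fps_qpoch x q (Suc (m - i)))"
    unfolding hq_multiplier_def fps_compose_sum_distrib sum_distrib_left by simp
  have "lin_factor (y * q ^ m) * hq_multiplier q x y m - lin_factor 1 * (lin_factor x * fps_dilate q (hq_multiplier q x y m))
      = (\<Sum>i\<le>m. fps_const (qbinom q m i * Pq q i x y)
          * (lin_factor (y * q ^ m) * fps_qpoch x q (m - i) - lin_factor 1 * fps_qpoch x q (Suc (m - i))))"
    unfolding dilate unfolding hq_multiplier_def
    by (simp add: sum_distrib_left right_diff_distrib sum_subtractf mult_ac)
  also have "\<dots> = (\<Sum>i\<le>m. fps_const (qbinom q m i * Pq q i x y) * (fps_X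
      * (fps_qpoch x q (Suc (m - i)) + fps_const (q ^ (m - i) * (x - q ^ i * y)) * fps_qpoch x q (m - i))))"
    by (rule sum.cong) (simp_all add: summand)
  finally show ?thesis
    by (simp add: sum_distrib_left mult_ac)
qed

lemma hq_multiplier_rec:
  "fps_X * hq_multiplier q x y (Suc m)
    = lin_factor (y * q ^ m) * hq_multiplier q x y m - lin_factor 1 * (lin_factor x * fps_dilate q (hq_multiplier q x y m))"
  unfolding hq_multiplier_difference hq_multiplier_Suc ..

lemma fps_qpoch_mult_hq_gf: "fps_qpoch y q m * hq_gf q x y m = hq_gf q x y 0 * hq_multiplier q x y m"
proof (induction m)
  case 0
  then show ?case
    by (simp add: hq_multiplier_def fps_qpoch_def q)
next
  case (Suc m)
  let ?H = "hq_gf q x y 0" and ?W = "hq_multiplier q x y m"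
  have "fps_X * (fps_qpoch y q (Suc m) * hq_gf q x y (Suc m))
      = fps_qpoch y q (Suc m) * hq_gf q x y m - fps_qpoch y q (Suc m) * fps_dilate q (hq_gf q x y m)"
    by (simp add: mult.left_commute[of fps_X] hq_gf_Suc[OF q] right_diff_distrib)
  also have "\<dots> = lin_factor (y * q ^ m) * (fps_qpoch y q m * hq_gf q x y m)
      - lin_factor y * fps_dilate q (fps_qpoch y q m * hq_gf q x y m)"
  proof -
    have "fps_qpoch y q (Suc m) * hq_gf q x y m = lin_factor (y * q ^ m) * (fps_qpoch y q m * hq_gf q x y m)"
      by (simp add: fps_qpoch_Suc mult_ac)
    moreover have "fps_qpoch y q (Suc m) * fps_dilate q (hq_gf q x y m)
        = lin_factor y * fps_dilate q (fps_qpoch y q m * hq_gf q x y m)"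
      by (simp only: fps_qpoch_Suc_dilate fps_dilate_mult mult.assoc)
    ultimately show ?thesis
      by (simp only:)
  qed
  also have "\<dots> = lin_factor (y * q ^ m) * (?H * ?W) - (lin_factor y * fps_dilate q ?H) * fps_dilate q ?W"
    by (simp only: Suc fps_dilate_mult mult.assoc)
  also have "\<dots> = ?H * (lin_factor (y * q ^ m) * ?W - lin_factor 1 * (lin_factor x * fps_dilate q ?W))"
    by (simp only: hq_gf_0_dilate[OF q]) (simp add: algebra_simps)
  also have "\<dots> = ?H * (fps_X * hq_multiplier q x y (Suc m))"
    by (simp only: hq_multiplier_rec)
  finally show ?case
    by (simp add: mult.left_commute[of ?H])
qed

lemma hq_multiplier_nth:
  "hq_multiplier q x y m $ j
    = (if j \<le> m then qbinom q m j * (-x) ^ j * q ^ (j choose 2) * hq q (m - j) x y else 0)"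
proof (cases "j \<le> m")
  case True
  have "hq_multiplier q x y m $ j = (\<Sum>i\<le>m - j. qbinom q m i * Pq q i x y * (qbinom q (m - i) j * (-x) ^ j * q ^ (j choose 2)))"
    unfolding hq_multiplier_def fps_sum_nth using True
    by (intro sum.mono_neutral_cong_right) (auto simp: fps_qpoch_nth[OF q])
  also have "\<dots> = (\<Sum>i\<le>m - j. qbinom q m j * (-x) ^ j * q ^ (j choose 2) * (qbinom q (m - j) i * Pq q i x y))"
    using True by (intro sum.cong refl) (simp add: qbinom_mult_qbinom[OF q, of i j m for i] mult_ac)
  finally show ?thesis
    using True by (simp add: hq_def sum_distrib_left)
qed (auto simp: hq_multiplier_def fps_sum_nth fps_qpoch_nth[OF q] intro!: sum.neutral)

lemma euler_term_mult_qpoch: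
  "k \<le> m \<Longrightarrow> euler_term q z k * qpoch q q m / qpoch q q (m - k) = qbinom q m k * (-z) ^ k * q ^ (k choose 2)"
  by (simp add: euler_term_def qbinom_def q field_simps power_minus')

lemma fps_qpoch_mult_hq_gf_nth:
  "(fps_qpoch y q m * hq_gf q x y m) $ n = qpoch q q m *
     (\<Sum>k\<le>min n m. euler_term q y k * (hq q (n + m - k) x y / (qpoch q q (n - k) * qpoch q q (m - k))))"
proof -
  have "(fps_qpoch y q m * hq_gf q x y m) $ n = (\<Sum>k\<le>min n m.
      qbinom q m k * (-y) ^ k * q ^ (k choose 2) * (hq q (n - k + m) x y / qpoch q q (n - k)))"
    unfolding fps_mult_nth sum_if_le_eq_sum_atMost_min[symmetric]
    by (rule sum.cong) (auto simp: fps_qpoch_nth[OF q] hq_gf_def)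
  also have "\<dots> = (\<Sum>k\<le>min n m. qpoch q q m *
      (euler_term q y k * (hq q (n + m - k) x y / (qpoch q q (n - k) * qpoch q q (m - k)))))"
  proof (rule sum.cong)
    fix k assume "k \<in> {..min n m}"
    then show "qbinom q m k * (-y) ^ k * q ^ (k choose 2) * (hq q (n - k + m) x y / qpoch q q (n - k))
      = qpoch q q m * (euler_term q y k * (hq q (n + m - k) x y / (qpoch q q (n - k) * qpoch q q (m - k))))"
      using euler_term_mult_qpoch[of k m y] by (simp add: q field_simps)
  qed simp
  finally show ?thesis
    by (simp add: sum_distrib_left)
qed

lemma hq_gf_mult_hq_multiplier_nth:
  "(hq_gf q x y 0 * hq_multiplier q x y m) $ n = qpoch q q m *
     (\<Sum>k\<le>min n m. euler_term q x k * (hq q (n - k) x y * hq q (m - k) x y / (qpoch q q (n - k) * qpoch q q (m - k))))"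
proof -
  have "(hq_gf q x y 0 * hq_multiplier q x y m) $ n = (\<Sum>k\<le>min n m.
      qbinom q m k * (-x) ^ k * q ^ (k choose 2) * hq q (m - k) x y * (hq q (n - k) x y / qpoch q q (n - k)))"
    unfolding mult.commute[of "hq_gf q x y 0"] fps_mult_nth sum_if_le_eq_sum_atMost_min[symmetric]
    by (rule sum.cong) (auto simp: hq_multiplier_nth hq_gf_def)
  also have "\<dots> = (\<Sum>k\<le>min n m. qpoch q q m *
      (euler_term q x k * (hq q (n - k) x y * hq q (m - k) x y / (qpoch q q (n - k) * qpoch q q (m - k)))))"
  proof (rule sum.cong)
    fix k assume "k \<in> {..min n m}"
    then show "qbinom q m k * (-x) ^ k * q ^ (k choose 2) * hq q (m - k) x y * (hq q (n - k) x y / qpoch q q (n - k))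
      = qpoch q q m * (euler_term q x k * (hq q (n - k) x y * hq q (m - k) x y / (qpoch q q (n - k) * qpoch q q (m - k))))"
      using euler_term_mult_qpoch[of k m x] by (simp add: q field_simps)
  qed simp
  finally show ?thesis
    by (simp add: sum_distrib_left)
qed

lemma hq_convolution_identity:
  "(\<Sum>k\<le>min n m. euler_term q y k * (hq q (n + m - k) x y / (qpoch q q (n - k) * qpoch q q (m - k))))
 = (\<Sum>k\<le>min n m. euler_term q x k * (hq q (n - k) x y * hq q (m - k) x y / (qpoch q q (n - k) * qpoch q q (m - k))))"
  using fps_qpoch_mult_hq_gf_nth[of m n] hq_gf_mult_hq_multiplier_nth[of m n]
  by (simp add: fps_qpoch_mult_hq_gf q)

end

section \<open>Regrouping the double series\<close>

definition lhs_summand :: "complex \<Rightarrow> complex \<Rightarrow> complex \<Rightarrow> complex \<Rightarrow> complex \<Rightarrow> nat \<Rightarrow> nat \<Rightarrow> nat \<Rightarrow> complex"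
  where "lhs_summand q x y t s k n m
    = hq q (n + m - k) x y * (t ^ n / qpoch q q (n - k)) * (s ^ m / qpoch q q (m - k))"

definition rhs_summand :: "complex \<Rightarrow> complex \<Rightarrow> complex \<Rightarrow> complex \<Rightarrow> complex \<Rightarrow> nat \<Rightarrow> nat \<Rightarrow> nat \<Rightarrow> complex"
  where "rhs_summand q x y t s k n m
    = hq q (n - k) x y * hq q (m - k) x y * (t ^ n / qpoch q q (n - k)) * (s ^ m / qpoch q q (m - k))"

lemma rhs_summand_shift: "rhs_summand q x y t s k (a + k) (b + k) = (s * t) ^ k * rhs_summand q x y t s 0 a b"
  by (simp add: rhs_summand_def power_add power_mult_distrib mult_ac)

lemma norm_lhs_summand_le:
  assumes K: "\<And>n. norm (1 / qpoch q q n) \<le> K" "0 \<le> K"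
    and B: "\<And>N. norm (hq q N x y) \<le> B * M ^ N" "0 \<le> B" "0 \<le> M"
  shows "norm (lhs_summand q x y t s k (a + k) (b + k))
    \<le> (B * K ^ 2) * (M * norm t * norm s) ^ k * (M * norm t) ^ a * (M * norm s) ^ b"
proof -
  have "norm (lhs_summand q x y t s k (a + k) (b + k))
      = norm (hq q (a + b + k) x y) * (norm t ^ (a + k) * norm (1 / qpoch q q a))
        * (norm s ^ (b + k) * norm (1 / qpoch q q b))"
    by (simp add: lhs_summand_def norm_mult norm_divide norm_power add.commute add.left_commute)
  also have "\<dots> \<le> (B * M ^ (a + b + k)) * (norm t ^ (a + k) * K) * (norm s ^ (b + k) * K)"
    using K B by (intro mult_mono) auto
  also have "\<dots> = (B * K ^ 2) * (M * norm t * norm s) ^ k * (M * norm t) ^ a * (M * norm s) ^ b"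
    by (simp add: power_add power_mult_distrib power2_eq_square mult_ac)
  finally show ?thesis .
qed

lemma norm_rhs_summand_le:
  assumes K: "\<And>n. norm (1 / qpoch q q n) \<le> K" "0 \<le> K"
    and B: "\<And>N. norm (hq q N x y) \<le> B * M ^ N" "0 \<le> B" "0 \<le> M"
  shows "norm (rhs_summand q x y t s k (a + k) (b + k))
    \<le> (B ^ 2 * K ^ 2) * (norm t * norm s) ^ k * (M * norm t) ^ a * (M * norm s) ^ b"
proof -
  have "norm (rhs_summand q x y t s k (a + k) (b + k))
      = norm (hq q a x y) * norm (hq q b x y) * (norm t ^ (a + k) * norm (1 / qpoch q q a))
        * (norm s ^ (b + k) * norm (1 / qpoch q q b))"
    by (simp add: rhs_summand_def norm_mult norm_divide norm_power)
  also have "\<dots> \<le> (B * M ^ a) * (B * M ^ b) * (norm t ^ (a + k) * K) * (norm s ^ (b + k) * K)"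
    using K B by (intro mult_mono) auto
  also have "\<dots> = (B ^ 2 * K ^ 2) * (norm t * norm s) ^ k * (M * norm t) ^ a * (M * norm s) ^ b"
    by (simp add: power_add power_mult_distrib power2_eq_square mult_ac)
  finally show ?thesis .
qed

lemma rhs_summand_double_suminf_shift:
  assumes K: "\<And>n. norm (1 / qpoch q q n) \<le> K" "0 \<le> K"
    and B: "\<And>N. norm (hq q N x y) \<le> B * M ^ N" "0 \<le> B" "0 \<le> M"
    and ts: "M * norm t < 1" "M * norm s < 1"
  shows "(s * t) ^ k * (\<Sum>n. \<Sum>m. rhs_summand q x y t s 0 n m)
    = (\<Sum>n. if k \<le> n then (\<Sum>m. if k \<le> m then rhs_summand q x y t s k n m else 0) else 0)"
proof -
  have "0 \<le> M * norm t" "0 \<le> M * norm s"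
    using \<open>0 \<le> M\<close> by simp_all
  note shift = double_suminf_if_le_shift[OF norm_rhs_summand_le[OF K B] this(1) ts(1) this(2) ts(2)]
  have "summable (\<lambda>a. \<Sum>b. rhs_summand q x y t s 0 a b)" "summable (\<lambda>b. rhs_summand q x y t s 0 a b)" for a
    using shift(2,3)[of 0] by simp_all
  then show ?thesis
    using shift(1)[of k] by (simp add: rhs_summand_shift suminf_mult)
qed

lemma diagonal_sum_lhs_eq_rhs:
  assumes "norm q < 1"
  shows "(\<Sum>k\<le>min n m. euler_term q y k * lhs_summand q x y t s k n m)
    = (\<Sum>k\<le>min n m. euler_term q x k * rhs_summand q x y t s k n m)"
  using arg_cong[OF hq_convolution_identity[OF assms, where x = x and y = y and n = n and m = m],
      of "\<lambda>S. t ^ n * s ^ m * S"]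
  by (simp add: lhs_summand_def rhs_summand_def sum_distrib_left mult_ac)

context
  fixes q x y t s :: complex
  assumes q: "norm q < 1"
    and t: "norm t * (1 + norm x + norm y) < 1"
    and s: "norm s * (1 + norm x + norm y) < 1"
begin

lemma summand_bounds:
  obtains K B E where "\<And>n. norm (1 / qpoch q q n) \<le> K" "0 \<le> K"
    and "\<And>N. norm (hq q N x y) \<le> B * (1 + norm x + norm y) ^ N" "0 \<le> B"
    and "\<And>z k. norm (euler_term q z k) \<le> E * norm z ^ k"
proof -
  obtain K where K: "\<And>n. norm (1 / qpoch q q n) \<le> K"
    using qpoch_inverse_bounded[OF q] by blast
  obtain B where B: "\<And>N. norm (hq q N x y) \<le> B * (1 + norm x + norm y) ^ N"
    using hq_bounded[OF q] by blast
  obtain E where "\<And>z k. norm (euler_term q z k) \<le> E * norm z ^ k"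
    using euler_term_bounded[OF q] by blast
  moreover have "0 \<le> K" "0 \<le> B"
    using K[of 0] B[of 0] by (auto intro: order_trans[OF norm_ge_zero])
  ultimately show thesis
    using that K B by blast
qed

lemma lhs_eq_infsum_diagonal:
  "(\<Sum>k. euler_term q y k * (\<Sum>n. if k \<le> n then (\<Sum>m. if k \<le> m then lhs_summand q x y t s k n m else 0) else 0))
   = infsum (\<lambda>(n, m). \<Sum>k\<le>min n m. euler_term q y k * lhs_summand q x y t s k n m) UNIV"
proof -
  define M where "M = 1 + norm x + norm y"
  obtain K B E where K: "\<And>n. norm (1 / qpoch q q n) \<le> K" "0 \<le> K"
    and B: "\<And>N. norm (hq q N x y) \<le> B * M ^ N" "0 \<le> B"
    and E: "\<And>z k. norm (euler_term q z k) \<le> E * norm z ^ k"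
    using summand_bounds unfolding M_def by blast
  have "1 \<le> M" "norm y \<le> M" "M * norm t < 1" "M * norm s < 1"
    using t s by (auto simp: M_def mult_ac)
  then have "norm y * (M * norm t * norm s) < 1"
    using mult_strict_mono'[of "M * norm t" 1 "M * norm s" 1]
    by (smt (verit) mult_right_mono mult_nonneg_nonneg norm_ge_zero mult.commute mult.left_commute)
  then show ?thesis
    using norm_lhs_summand_le[OF K B] E \<open>1 \<le> M\<close> \<open>M * norm t < 1\<close> \<open>M * norm s < 1\<close>
    by (intro suminf_triple_eq_infsum_diagonal[where D = E and \<alpha> = "norm y" and C = "B * K ^ 2"
          and \<delta> = "M * norm t * norm s" and \<beta> = "M * norm t" and \<gamma> = "M * norm s"])
      auto
qed

lemma rhs_eq_infsum_diagonal:
  "qpoch_inf (x * s * t) q * (\<Sum>n. \<Sum>m. rhs_summand q x y t s 0 n m)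
   = infsum (\<lambda>(n, m). \<Sum>k\<le>min n m. euler_term q x k * rhs_summand q x y t s k n m) UNIV"
proof -
  define M where "M = 1 + norm x + norm y"
  obtain K B E where K: "\<And>n. norm (1 / qpoch q q n) \<le> K" "0 \<le> K"
    and B: "\<And>N. norm (hq q N x y) \<le> B * M ^ N" "0 \<le> B"
    and E: "\<And>z k. norm (euler_term q z k) \<le> E * norm z ^ k"
    using summand_bounds unfolding M_def by blast
  have "1 \<le> M" "norm x \<le> M" "M * norm t < 1" "M * norm s < 1" "norm t < 1"
    using t s mult_left_mono[of 1 M "norm t"] by (auto simp: M_def mult_ac)
  then have "0 \<le> M" "norm x * (norm t * norm s) < 1"
    by (auto, smt (verit) mult_left_le_one_le mult_mono mult_nonneg_nonneg norm_ge_zero mult.commute mult.assoc)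
  then have "qpoch_inf (x * (s * t)) q * (\<Sum>n. \<Sum>m. rhs_summand q x y t s 0 n m)
      = (\<Sum>k. euler_term q x k * ((s * t) ^ k * (\<Sum>n. \<Sum>m. rhs_summand q x y t s 0 n m)))"
    by (intro qpoch_inf_mult_eq_suminf[OF q]) (simp add: norm_mult mult_ac)
  also have "\<dots> = infsum (\<lambda>(n, m). \<Sum>k\<le>min n m. euler_term q x k * rhs_summand q x y t s k n m) UNIV"
    unfolding rhs_summand_double_suminf_shift[OF K B \<open>0 \<le> M\<close> \<open>M * norm t < 1\<close> \<open>M * norm s < 1\<close>]
    using E norm_rhs_summand_le[OF K B \<open>0 \<le> M\<close>] \<open>norm x * (norm t * norm s) < 1\<close> \<open>0 \<le> M\<close>
      \<open>M * norm t < 1\<close> \<open>M * norm s < 1\<close>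
    by (intro suminf_triple_eq_infsum_diagonal[where D = E and \<alpha> = "norm x" and C = "B ^ 2 * K ^ 2"
          and \<delta> = "norm t * norm s" and \<beta> = "M * norm t" and \<gamma> = "M * norm s"])
      auto
  finally show ?thesis
    by (simp add: mult.assoc)
qed

end

theorem theorem3p3:
  fixes q x y t s :: complex
  assumes "norm q < 1"
    and "norm t * (1 + norm x + norm y) < 1"
    and "norm s * (1 + norm x + norm y) < 1"
  shows "(\<Sum>k. ((-1) ^ k * y ^ k * q ^ (k choose 2) / qpoch q q k) *
            (\<Sum>n. if k \<le> n then
               (\<Sum>m. if k \<le> m then
                  hq q (n + m - k) x y * (t ^ n / qpoch q q (n - k)) * (s ^ m / qpoch q q (m - k))
                else 0)
             else 0))
       = qpoch_inf (x * s * t) q *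
         (\<Sum>n. \<Sum>m. hq q n x y * hq q m x y * (t ^ n / qpoch q q n) * (s ^ m / qpoch q q m))"
proof -
  have "(\<Sum>k. euler_term q y k * (\<Sum>n. if k \<le> n then (\<Sum>m. if k \<le> m then lhs_summand q x y t s k n m else 0) else 0))
      = qpoch_inf (x * s * t) q * (\<Sum>n. \<Sum>m. rhs_summand q x y t s 0 n m)"
    unfolding lhs_eq_infsum_diagonal[OF assms] rhs_eq_infsum_diagonal[OF assms]
      diagonal_sum_lhs_eq_rhs[OF assms(1)] ..
  then show ?thesis
    unfolding euler_term_def lhs_summand_def rhs_summand_def by simp
qed

end
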